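(* Let $(A_n)_{n\ge 0}$ and $(B_n)_{n\ge 0}$ be sequences of real numbers and let $(x_n)_{n\ge 0}$ be a solution of $$x_{n+10}=\frac{x_n}{A_n+B_n\,x_nx_{n+2}x_{n+4}x_{n+6}x_{n+8}},\qquad n\ge 0,$$ with initial values $x_0,\dots,x_9$, such that all terms are well-defined and nonzero. For $j\in\{0,1\}$ put $F_j=\dfrac{1}{x_jx_{j+2}x_{j+4}x_{j+6}x_{j+8}}$. Then for every $k\in\{0,1,\dots,9\}$ and every $n\ge 0$, $$x_{10n+k}=x_k\prod_{s=0}^{n-1}\frac{F_{\tau(k)}\prod\limits_{t=0}^{m_s-1}A_{2t+\tau(k)}+\sum\limits_{i=0}^{m_s-1}\Big(B_{2i+\tau(k)}\prod\limits_{l=i+1}^{m_s-1}A_{2l+\tau(k)}\Big)}{F_{\tau(k)}\prod\limits_{t=0}^{m_s}A_{2t+\tau(k)}+\sum\limits_{i=0}^{m_s}\Big(B_{2i+\tau(k)}\prod\limits_{l=i+1}^{m_s}A_{2l+\tau(k)}\Big)},$$ where $m_s=5s+\lfloor k/2\rfloor$.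
   Context: $\tau(k)\in\{0,1\}$ denotes the remainder of $k$ upon division by $2$ and $\lfloor\cdot\rfloor$ is the floor function, so $k=2\lfloor k/2\rfloor+\tau(k)$. Empty products equal $1$, empty sums equal $0$; for $n=0$ the outer product is empty. This equation is the forward shift by $9$ of $x_{n+1}=x_{n-9}/(a_n+b_nx_{n-1}x_{n-3}x_{n-5}x_{n-7}x_{n-9})$ with $A_n=a_{n+9}$, $B_n=b_{n+9}$. *)

theory Defs
  imports Complex_Main
begin

definition Fval :: "(nat \<Rightarrow> real) \<Rightarrow> nat \<Rightarrow> real" where
  "Fval x j = 1 / (x j * x (j+2) * x (j+4) * x (j+6) * x (j+8))"

definition Pexpr :: "(nat \<Rightarrow> real) \<Rightarrow> (nat \<Rightarrow> real) \<Rightarrow> real \<Rightarrow> nat \<Rightarrow> nat \<Rightarrow> real" where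
  "Pexpr A B F r m = F * (\<Prod>t<m. A (2*t + r))
     + (\<Sum>i<m. B (2*i + r) * (\<Prod>l\<in>{i+1..<m}. A (2*l + r)))"

end

theory Submission
  imports Defs
begin

text \<open>The reciprocal window products \<open>Fval x n = 1 / (x n x (n+2) \<dots> x (n+8))\<close> turn the
  recurrence into the linear first-order recurrence \<open>Fval x (n+2) = A n Fval x n + B n\<close>
  along each parity class, whose solution is the expression \<open>Pexpr\<close>. Since
  \<open>x (n+10) = x n Fval x n / Fval x (n+2)\<close>, iterating over steps of ten telescopes into
  the stated product.\<close>

lemma Pexpr_0 [simp]: "Pexpr A B F r 0 = F"
  by (simp add: Pexpr_def)

lemma Pexpr_Suc:
  "Pexpr A B F r (Suc m) = A (2*m + r) * Pexpr A B F r m + B (2*m + r)"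
proof -
  have "(\<Sum>i<m. B (2*i + r) * (\<Prod>l\<in>{i+1..<Suc m}. A (2*l + r)))
     = A (2*m + r) * (\<Sum>i<m. B (2*i + r) * (\<Prod>l\<in>{i+1..<m}. A (2*l + r)))"
    unfolding sum_distrib_left
    by (rule sum.cong) (simp_all add: prod.atLeastLessThan_Suc)
  then show ?thesis
    by (simp add: Pexpr_def algebra_simps)
qed

lemma linear_recurrence_step2_closed_form:
  fixes y A B :: "nat \<Rightarrow> real"
  assumes "\<And>n. y (n+2) = A n * y n + B n"
  shows "y (2*m + r) = Pexpr A B (y r) r m"
proof (induction m)
  case (Suc m)
  have "y (2 * Suc m + r) = y ((2*m + r) + 2)" by simp
  also have "\<dots> = A (2*m + r) * y (2*m + r) + B (2*m + r)" by (rule assms)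
  finally show ?case using Suc by (simp add: Pexpr_Suc)
qed simp

lemma Fval_add_2:
  "Fval x (n+2) = 1 / (x (n+2) * x (n+4) * x (n+6) * x (n+8) * x (n+10))"
  unfolding Fval_def by (simp only: add.assoc numeral_plus_numeral semiring_norm)

lemma Fval_linear_recurrence:
  fixes A B x :: "nat \<Rightarrow> real"
  assumes nz: "\<And>n. x n \<noteq> 0"
    and den: "A n + B n * x n * x (n+2) * x (n+4) * x (n+6) * x (n+8) \<noteq> 0"
    and rec: "x (n+10) = x n / (A n + B n * x n * x (n+2) * x (n+4) * x (n+6) * x (n+8))"
  shows "Fval x (n+2) = A n * Fval x n + B n"
  unfolding Fval_add_2 rec
  using nz[of n] nz[of "n+2"] nz[of "n+4"] nz[of "n+6"] nz[of "n+8"] den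
  by (simp add: Fval_def field_simps)

lemma add_10_eq_Fval_ratio:
  assumes nz: "\<And>n. x n \<noteq> (0::real)"
  shows "x (n+10) = x n * (Fval x n / Fval x (n+2))"
  unfolding Fval_add_2
  using nz[of n] nz[of "n+2"] nz[of "n+4"] nz[of "n+6"] nz[of "n+8"] nz[of "n+10"]
  by (simp add: Fval_def field_simps)

lemma iterate_multiplicative_step:
  fixes x q :: "nat \<Rightarrow> 'a::comm_monoid_mult"
  assumes "\<And>n. x (n+p) = x n * q n"
  shows "x (p*n + k) = x k * (\<Prod>s<n. q (p*s + k))"
proof (induction n)
  case (Suc n)
  have "x (p * Suc n + k) = x ((p*n + k) + p)" by (simp add: algebra_simps)
  also have "\<dots> = x (p*n + k) * q (p*n + k)" by (rule assms)
  finally show ?case using Suc by (simp add: mult.assoc)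
qed simp

theorem mainTheorem1:
  fixes A B x :: "nat \<Rightarrow> real"
  assumes nz: "\<And>n. x n \<noteq> 0"
    and den: "\<And>n. A n + B n * x n * x (n+2) * x (n+4) * x (n+6) * x (n+8) \<noteq> 0"
    and rec: "\<And>n. x (n+10) = x n / (A n + B n * x n * x (n+2) * x (n+4) * x (n+6) * x (n+8))"
    and k: "k \<le> (9::nat)"
  shows "x (10*n + k) = x k * (\<Prod>s<n.
            Pexpr A B (Fval x (k mod 2)) (k mod 2) (5*s + k div 2)
          / Pexpr A B (Fval x (k mod 2)) (k mod 2) (5*s + k div 2 + 1))"
proof -
  have Fval_closed_form: "Fval x (2*m + r) = Pexpr A B (Fval x r) r m" for m r
    using Fval_linear_recurrence[OF nz den rec]
    by (rule linear_recurrence_step2_closed_form)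
  have "10*s + k = 2 * (5*s + k div 2) + k mod 2"
    and "10*s + k + 2 = 2 * (5*s + k div 2 + 1) + k mod 2" for s
    by simp_all
  then have Fval_window:
    "Fval x (10*s + k) = Pexpr A B (Fval x (k mod 2)) (k mod 2) (5*s + k div 2)"
    "Fval x (10*s + k + 2) = Pexpr A B (Fval x (k mod 2)) (k mod 2) (5*s + k div 2 + 1)" for s
    by (simp_all only: Fval_closed_form)
  have "x (10*n + k) = x k * (\<Prod>s<n. Fval x (10*s + k) / Fval x (10*s + k + 2))"
    using add_10_eq_Fval_ratio[OF nz] by (rule iterate_multiplicative_step)
  then show ?thesis
    by (simp only: Fval_window)
qed

end
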